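(* Assume $\phi(x)>0$ for all $x>0$ and $\phi$ is non-increasing. Let $i<j$ and let $d_{i+1},\dots,d_j\ge0$ be a fixed sequence of doses. Define two trajectories by $Y_{k+1}^+=F(Y_k^+)-\mathrm{BED}_T(d_{k+1})$ and $\widetilde Y_{k+1}^+=F(\widetilde Y_k^+)-\mathrm{BED}_T(d_{k+1})$ for $k=i,\dots,j-1$, starting from given values $Y_i^+$ and $\widetilde Y_i^+$. If $Y_i^+<\widetilde Y_i^+$, then $Y_j^+<\widetilde Y_j^+$ and $\widetilde Y_j^+-Y_j^+\le \widetilde Y_i^+-Y_i^+$.
   Context: Tumor parameter $\alpha_T>0$, $\beta_T>0$, $[\alpha/\beta]_T=\alpha_T/\beta_T$, and $\mathrm{BED}_T(d)=d\left(1+\frac{d}{[\alpha/\beta]_T}\right)$. Tumor growth follows $\frac{1}{x}\frac{dx}{dt}=\phi(x)$ with $\phi:(0,\infty)\to\mathbb{R}$ continuous and non-increasing. With $Y=\ln(\text{number of tumor cells})/\alpha_T$, $F$ denotes the map sending the value of $Y$ at time $t$ to its value at time $t+1$ under this ODE (one day of growth without radiation). *)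

theory Defs
  imports "HOL-Analysis.Analysis"
begin

definition BED_T :: "real \<Rightarrow> real \<Rightarrow> real \<Rightarrow> real" where
  "BED_T \<alpha>T \<beta>T d = d * (1 + d / (\<alpha>T / \<beta>T))"

definition growth_solution :: "(real \<Rightarrow> real) \<Rightarrow> real \<Rightarrow> (real \<Rightarrow> real) \<Rightarrow> bool" where
  "growth_solution \<phi> x0 x \<longleftrightarrow> x 0 = x0 \<and>
     (\<forall>t\<in>{0..1}. x t > 0 \<and> (x has_real_derivative x t * \<phi> (x t)) (at t within {0..1}))"

text \<open>F: value of Y = ln(cells)/alpha_T after one day of growth, starting from Y = y.\<close>
definition growth_map :: "real \<Rightarrow> (real \<Rightarrow> real) \<Rightarrow> real \<Rightarrow> real" where
  "growth_map \<alpha>T \<phi> y =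
     ln (THE x1. \<exists>x. growth_solution \<phi> (exp (\<alpha>T * y)) x \<and> x 1 = x1) / \<alpha>T"

end

theory Submission
  imports Defs
begin

(*
  In the variable u = ln x the growth law reads u' = 1 / h u with h v = 1 / \<phi> (exp v), a positive,
  continuous, non-decreasing function. Along a solution the integral of h from u 0 to u t equals t,
  so one day of growth moves u from a to the point b at which that integral reaches 1, and F is this
  time-one map rescaled by \<alpha>_T. A trajectory started higher sees larger values of h, hence
  advances by at most as much in one day: the map is strictly increasing and 1-Lipschitz. Both
  trajectories then lose the same BED, so order and gap bound propagate along the treatment days.
*)

locale log_growth =
  fixes h :: "real \<Rightarrow> real"
  assumes h_continuous: "continuous_on UNIV h"
    and h_pos: "\<And>v. 0 < h v"
    and h_mono: "mono h"
begin

lemma h_continuous_on: "continuous_on S h"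
  using continuous_on_subset[OF h_continuous] by blast

lemma h_integrable: "h integrable_on {a..b}"
  by (rule integrable_continuous_real[OF h_continuous_on])

lemma integral_h_combine: "a \<le> c \<Longrightarrow> c \<le> b \<Longrightarrow> integral {a..c} h + integral {c..b} h = integral {a..b} h"
  by (rule Henstock_Kurzweil_Integration.integral_combine) (auto intro: h_integrable)

lemma integral_h_lower_bound:
  assumes "a \<le> b"
  shows "(b - a) * h a \<le> integral {a..b} h"
proof -
  have "integral {a..b} (\<lambda>_. h a) \<le> integral {a..b} h"
    by (rule integral_le) (auto intro: h_integrable monoD[OF h_mono])
  then show ?thesis using assms by simp
qed

lemma integral_h_pos: "a < b \<Longrightarrow> 0 < integral {a..b} h"
  using integral_h_lower_bound[of a b] mult_pos_pos[of "b - a" "h a"] h_pos[of a] by linarith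

lemma integral_h_strict_mono: "a \<le> b \<Longrightarrow> b < c \<Longrightarrow> integral {a..b} h < integral {a..c} h"
  using integral_h_combine[of a b c] integral_h_pos[of b c] by linarith

lemma integral_h_mono: "a \<le> b \<Longrightarrow> b \<le> c \<Longrightarrow> integral {a..b} h \<le> integral {a..c} h"
  using integral_h_strict_mono[of a b c] by (cases "b = c") auto

lemma has_real_derivative_integral_h:
  assumes "p < v"
  shows "((\<lambda>w. integral {p..w} h) has_real_derivative h v) (at v)"
proof -
  have "v \<in> interior {p..v+1}" using assms by simp
  then have "at v within {p..v+1} = at v" by (rule at_within_interior)
  moreover have "((\<lambda>w. integral {p..w} h) has_real_derivative h v) (at v within {p..v+1})"
    by (rule integral_has_real_derivative[OF h_continuous_on]) (use assms in auto)
  ultimately show ?thesis by simp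
qed

definition time_one_flow :: "real \<Rightarrow> real" where
  "time_one_flow a = (THE b. a \<le> b \<and> integral {a..b} h = 1)"

lemma time_one_flow_unique:
  assumes "a \<le> b" "integral {a..b} h = 1" "a \<le> c" "integral {a..c} h = 1"
  shows "b = c"
  using integral_h_strict_mono[of a b c] integral_h_strict_mono[of a c b] assms
  by (cases b c rule: linorder_cases) auto

lemma time_one_flow_exists: "\<exists>b. a \<le> b \<and> integral {a..b} h = 1"
proof -
  define b where "b = a + 1 / h a"
  have "a \<le> b" using h_pos[of a] by (simp add: b_def)
  moreover have "1 \<le> integral {a..b} h"
    using integral_h_lower_bound[OF \<open>a \<le> b\<close>] h_pos[of a] by (simp add: b_def)
  moreover have "continuous_on {a..b} (\<lambda>w. integral {a..w} h)"
    by (rule indefinite_integral_continuous_1[OF h_integrable])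
  ultimately obtain c where "a \<le> c" "c \<le> b" "integral {a..c} h = 1"
    using IVT'[of "\<lambda>w. integral {a..w} h" a 1 b] by auto
  then show ?thesis by blast
qed

lemma time_one_flow: "a \<le> time_one_flow a" "integral {a..time_one_flow a} h = 1"
proof -
  have "a \<le> time_one_flow a \<and> integral {a..time_one_flow a} h = 1"
    unfolding time_one_flow_def
    by (rule theI') (use time_one_flow_exists time_one_flow_unique in blast)
  then show "a \<le> time_one_flow a" "integral {a..time_one_flow a} h = 1" by auto
qed

lemma time_one_flow_eqI: "a \<le> b \<Longrightarrow> integral {a..b} h = 1 \<Longrightarrow> time_one_flow a = b"
  using time_one_flow time_one_flow_unique by blast

lemma time_one_flow_strict_mono:
  assumes "a < b"
  shows "time_one_flow a < time_one_flow b"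
proof (rule ccontr)
  assume "\<not> ?thesis"
  then have le: "time_one_flow b \<le> time_one_flow a" by simp
  then have "integral {b..time_one_flow b} h \<le> integral {b..time_one_flow a} h"
    using integral_h_mono time_one_flow(1)[of b] by simp
  moreover have "integral {a..b} h + integral {b..time_one_flow a} h = integral {a..time_one_flow a} h"
    using integral_h_combine le time_one_flow(1)[of b] assms by simp
  ultimately show False
    using integral_h_pos[OF assms] time_one_flow(2)[of a] time_one_flow(2)[of b] by linarith
qed

lemma time_one_flow_diff_le:
  assumes "a \<le> b"
  shows "time_one_flow b - time_one_flow a \<le> b - a"
proof (rule ccontr)
  define c where "c = time_one_flow a + (b - a)"
  assume "\<not> ?thesis"
  then have "c < time_one_flow b" by (simp add: c_def)
  have "integral {a..time_one_flow a} h \<le> integral {a..time_one_flow a} (h \<circ> (+) (b - a))"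
  proof (rule integral_le)
    show "(h \<circ> (+) (b - a)) integrable_on {a..time_one_flow a}"
      by (intro integrable_continuous_real continuous_on_compose continuous_intros h_continuous_on)
    show "\<And>v. h v \<le> (h \<circ> (+) (b - a)) v"
      using assms by (auto intro: monoD[OF h_mono])
  qed (rule h_integrable)
  also have "\<dots> = integral {b..c} h"
    by (simp add: integral_shift_Icc_real c_def)
  also have "\<dots> < integral {b..time_one_flow b} h"
    using integral_h_strict_mono \<open>c < time_one_flow b\<close> time_one_flow(1)[of a] by (simp add: c_def)
  finally show False
    using time_one_flow(2) by simp
qed

lemma solution_reaches_time_one_flow:
  assumes u': "\<And>t. t \<in> {0..1} \<Longrightarrow> (u has_real_derivative inverse (h (u t))) (at t within {0..1})"
  shows "u 1 = time_one_flow (u 0)"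
proof -
  have "continuous_on {0..1} u"
    unfolding continuous_on_eq_continuous_within using u' DERIV_continuous by blast
  then obtain tmin where tmin: "\<forall>t\<in>{0..1}. u tmin \<le> u t"
    using continuous_attains_inf[of "{0..1}" u] by auto
  define p where "p = u tmin - 1"
  have below: "p < u t" if "t \<in> {0..1}" for t
    using tmin that by (force simp: p_def)
  define G where "G t = integral {p..u t} h - t" for t
  have "(G has_real_derivative 0) (at t within {0..1})" if t: "t \<in> {0..1}" for t
  proof -
    have "((\<lambda>t. integral {p..u t} h) has_real_derivative h (u t) * inverse (h (u t))) (at t within {0..1})"
      by (rule DERIV_chain2[OF has_real_derivative_integral_h[OF below[OF t]] u'[OF t]])
    then have "((\<lambda>t. integral {p..u t} h - t) has_real_derivative 1 - 1) (at t within {0..1})"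
      using h_pos[of "u t"] by (intro derivative_intros) simp_all
    then show ?thesis by (simp add: G_def[abs_def])
  qed
  then obtain c where "\<forall>t\<in>{0..1}. G t = c"
    using has_field_derivative_zero_constant[of "{0..1}" G] by auto
  then have "G 1 = G 0" by simp
  then have increment: "integral {p..u 1} h = integral {p..u 0} h + 1"
    by (simp add: G_def)
  have "u 0 \<le> u 1"
  proof (rule ccontr)
    assume "\<not> u 0 \<le> u 1"
    then have "integral {p..u 1} h < integral {p..u 0} h"
      using integral_h_strict_mono below[of 1] by simp
    then show False using increment by linarith
  qed
  moreover have "integral {u 0..u 1} h = 1"
    using integral_h_combine[of p "u 0" "u 1"] below[of 0] \<open>u 0 \<le> u 1\<close> increment by simp
  ultimately show ?thesis by (simp add: time_one_flow_eqI)
qed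

lemma solution_exists: "\<exists>u. u 0 = a \<and> (\<forall>t\<in>{0..1}. (u has_real_derivative inverse (h (u t))) (at t))"
proof -
  define K where "K v = integral {a - 1..v} h" for v
  define S where "S = {a - 1<..<time_one_flow a + 1}"
  define u where "u t = the_inv_into S K (K a + t)" for t
  have K_deriv: "(K has_real_derivative h v) (at v)" if "v \<in> S" for v
    unfolding K_def using that has_real_derivative_integral_h by (simp add: S_def)
  have K_cont: "continuous_on S K"
    using K_deriv DERIV_isCont by (blast intro: continuous_at_imp_continuous_on)
  have "strict_mono_on S K"
    unfolding K_def using integral_h_strict_mono by (intro strict_mono_onI) (simp add: S_def)
  then have K_inj: "inj_on K S" by (rule strict_mono_on_imp_inj_on)
  have "a \<in> S" "{a..time_one_flow a} \<subseteq> S"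
    using time_one_flow(1)[of a] by (auto simp: S_def)
  have "K (time_one_flow a) = K a + 1"
    using integral_h_combine[of "a - 1" a "time_one_flow a"] time_one_flow[of a] by (simp add: K_def)
  have u_in: "u t \<in> S \<and> K (u t) = K a + t" if t: "t \<in> {0..1}" for t
  proof -
    obtain v where "a \<le> v" "v \<le> time_one_flow a" "K v = K a + t"
      using IVT'[of K a "K a + t" "time_one_flow a"] t time_one_flow(1)[of a]
        continuous_on_subset[OF K_cont \<open>{a..time_one_flow a} \<subseteq> S\<close>]
        \<open>K (time_one_flow a) = K a + 1\<close> by auto
    moreover from this have "v \<in> S" using \<open>{a..time_one_flow a} \<subseteq> S\<close> by auto
    ultimately have "u t = v"
      unfolding u_def by (rule_tac the_inv_into_f_eq[OF K_inj]) simp_all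
    with \<open>v \<in> S\<close> \<open>K v = K a + t\<close> show ?thesis by simp
  qed
  have "u 0 = a"
    using the_inv_into_f_f[OF K_inj \<open>a \<in> S\<close>] by (simp add: u_def)
  moreover have "(u has_real_derivative inverse (h (u t))) (at t)" if t: "t \<in> {0..1}" for t
  proof -
    have "(the_inv_into S K has_real_derivative inverse (h (u t))) (at (K (u t)))"
      unfolding has_field_derivative_def
    proof (rule has_derivative_inverse_strong[of S "u t" K])
      show "(K has_derivative (*) (h (u t))) (at (u t))"
        using K_deriv u_in[OF t] by (simp add: has_field_derivative_def)
      show "(*) (h (u t)) \<circ> (*) (inverse (h (u t))) = id"
        using h_pos[of "u t"] by (auto simp: fun_eq_iff)
    qed (use u_in[OF t] K_cont the_inv_into_f_f[OF K_inj] in \<open>auto simp: S_def\<close>)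
    then have "(the_inv_into S K has_real_derivative inverse (h (u t))) (at (K a + t))"
      using u_in[OF t] by simp
    moreover have "((\<lambda>t. K a + t) has_real_derivative 1) (at t)"
      by (auto intro!: derivative_eq_intros)
    ultimately have "((\<lambda>t. the_inv_into S K (K a + t)) has_real_derivative inverse (h (u t)) * 1) (at t)"
      by (rule DERIV_chain2)
    then show ?thesis by (simp add: u_def[abs_def])
  qed
  ultimately show ?thesis by blast
qed

end

definition log_time_density :: "(real \<Rightarrow> real) \<Rightarrow> real \<Rightarrow> real" where
  "log_time_density \<phi> v = inverse (\<phi> (exp v))"

locale growth_law =
  fixes \<phi> :: "real \<Rightarrow> real"
  assumes \<phi>_continuous: "continuous_on {0<..} \<phi>"
    and \<phi>_pos: "\<forall>x>0. \<phi> x > 0"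
    and \<phi>_antimono: "\<forall>x y. 0 < x \<longrightarrow> x \<le> y \<longrightarrow> \<phi> y \<le> \<phi> x"
begin

sublocale log_growth "log_time_density \<phi>"
proof
  have "continuous_on UNIV (\<lambda>v. \<phi> (exp v))"
    by (rule continuous_on_compose2[OF \<phi>_continuous]) (auto intro!: continuous_intros)
  then show "continuous_on UNIV (log_time_density \<phi>)"
    unfolding log_time_density_def using \<phi>_pos
    by (intro continuous_on_inverse) (auto simp: less_imp_neq[symmetric])
  show "0 < log_time_density \<phi> v" for v
    using \<phi>_pos by (simp add: log_time_density_def)
  show "mono (log_time_density \<phi>)"
    unfolding log_time_density_def using \<phi>_pos \<phi>_antimono
    by (intro monoI le_imp_inverse_le) auto
qed

lemma inverse_log_time_density [simp]: "inverse (log_time_density \<phi> v) = \<phi> (exp v)"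
  by (simp add: log_time_density_def)

lemma growth_solution_time_one_flow:
  assumes sol: "growth_solution \<phi> x0 x"
  shows "ln (x 1) = time_one_flow (ln x0)"
proof -
  have x_pos: "x t > 0" and x': "(x has_real_derivative x t * \<phi> (x t)) (at t within {0..1})"
    if "t \<in> {0..1}" for t
    using sol that by (auto simp: growth_solution_def)
  have "((\<lambda>t. ln (x t)) has_real_derivative inverse (log_time_density \<phi> (ln (x t)))) (at t within {0..1})"
    if t: "t \<in> {0..1}" for t
  proof -
    have "((\<lambda>t. ln (x t)) has_real_derivative inverse (x t) * (x t * \<phi> (x t))) (at t within {0..1})"
      by (rule DERIV_chain2[OF DERIV_ln x'[OF t]]) (use x_pos[OF t] in auto)
    moreover have "inverse (x t) * (x t * \<phi> (x t)) = inverse (log_time_density \<phi> (ln (x t)))"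
      using x_pos[OF t] by simp
    ultimately show ?thesis by simp
  qed
  then have "ln (x 1) = time_one_flow (ln (x 0))"
    by (rule solution_reaches_time_one_flow)
  then show ?thesis using sol by (simp add: growth_solution_def)
qed

lemma growth_solution_exists:
  assumes "x0 > 0"
  shows "\<exists>x. growth_solution \<phi> x0 x"
proof -
  obtain u where u0: "u 0 = ln x0"
    and u': "\<And>t. t \<in> {0..1} \<Longrightarrow> (u has_real_derivative inverse (log_time_density \<phi> (u t))) (at t)"
    using solution_exists by blast
  have "growth_solution \<phi> x0 (\<lambda>t. exp (u t))"
    unfolding growth_solution_def
  proof (intro conjI ballI)
    fix t :: real assume t: "t \<in> {0..1}"
    have "((\<lambda>t. exp (u t)) has_real_derivative exp (u t) * \<phi> (exp (u t))) (at t)"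
      using DERIV_chain2[OF DERIV_exp u'[OF t]] by simp
    then show "((\<lambda>t. exp (u t)) has_real_derivative exp (u t) * \<phi> (exp (u t))) (at t within {0..1})"
      by (rule has_field_derivative_at_within)
  qed (use u0 assms in auto)
  then show ?thesis by blast
qed

lemma growth_map_eq: "growth_map \<alpha> \<phi> y = time_one_flow (\<alpha> * y) / \<alpha>"
proof -
  have endpoint: "x 1 = exp (time_one_flow (\<alpha> * y))" if "growth_solution \<phi> (exp (\<alpha> * y)) x" for x
    using growth_solution_time_one_flow[OF that] that
    by (metis atLeastAtMost_iff exp_ln growth_solution_def ln_exp order_refl zero_le_one)
  obtain x where "growth_solution \<phi> (exp (\<alpha> * y)) x"
    using growth_solution_exists[of "exp (\<alpha> * y)"] by auto
  then have "(THE x1. \<exists>x. growth_solution \<phi> (exp (\<alpha> * y)) x \<and> x 1 = x1) = exp (time_one_flow (\<alpha> * y))"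
    using endpoint by (intro the_equality) blast+
  then show ?thesis by (simp add: growth_map_def)
qed

lemma growth_map_strict_mono: "\<alpha> > 0 \<Longrightarrow> y < z \<Longrightarrow> growth_map \<alpha> \<phi> y < growth_map \<alpha> \<phi> z"
  using time_one_flow_strict_mono[of "\<alpha> * y" "\<alpha> * z"] by (simp add: growth_map_eq divide_strict_right_mono)

lemma growth_map_diff_le:
  assumes "\<alpha> > 0" "y \<le> z"
  shows "growth_map \<alpha> \<phi> z - growth_map \<alpha> \<phi> y \<le> z - y"
proof -
  have "time_one_flow (\<alpha> * z) - time_one_flow (\<alpha> * y) \<le> \<alpha> * (z - y)"
    using time_one_flow_diff_le[of "\<alpha> * y" "\<alpha> * z"] assms by (simp add: right_diff_distrib)
  then show ?thesis
    using assms(1) by (simp add: growth_map_eq diff_divide_distrib[symmetric] pos_divide_le_eq mult.commute)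
qed

end

lemma iterates_order_and_gap:
  fixes f :: "real \<Rightarrow> real" and Y Z c :: "nat \<Rightarrow> real"
  assumes f_less: "\<And>y z. y < z \<Longrightarrow> f y < f z"
    and f_diff: "\<And>y z. y \<le> z \<Longrightarrow> f z - f y \<le> z - y"
    and "i \<le> j"
    and Y: "\<And>k. i \<le> k \<Longrightarrow> k < j \<Longrightarrow> Y (Suc k) = f (Y k) - c (Suc k)"
    and Z: "\<And>k. i \<le> k \<Longrightarrow> k < j \<Longrightarrow> Z (Suc k) = f (Z k) - c (Suc k)"
    and "Y i < Z i"
  shows "Y j < Z j \<and> Z j - Y j \<le> Z i - Y i"
  using \<open>i \<le> j\<close> Y Z
proof (induction j rule: dec_induct)
  case base
  then show ?case using \<open>Y i < Z i\<close> by simp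
next
  case (step k)
  then have "Y k < Z k" "Z k - Y k \<le> Z i - Y i" by simp_all
  moreover have "Z (Suc k) - Y (Suc k) = f (Z k) - f (Y k)"
    using step.prems step.hyps by simp
  ultimately show ?case
    using f_less[of "Y k" "Z k"] f_diff[of "Y k" "Z k"] by simp
qed

theorem lemma2:
  fixes \<alpha>T \<beta>T :: real and \<phi> :: "real \<Rightarrow> real"
    and i j :: nat and d Y Yt :: "nat \<Rightarrow> real"
  assumes "\<alpha>T > 0" and "\<beta>T > 0"
    and "continuous_on {0<..} \<phi>"
    and "\<forall>x>0. \<phi> x > 0"
    and "\<forall>x y. 0 < x \<longrightarrow> x \<le> y \<longrightarrow> \<phi> y \<le> \<phi> x"
    and "i < j"
    and "\<forall>k\<in>{i+1..j}. d k \<ge> 0"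
    and "\<forall>k\<in>{i..<j}. Y (k+1) = growth_map \<alpha>T \<phi> (Y k) - BED_T \<alpha>T \<beta>T (d (k+1))"
    and "\<forall>k\<in>{i..<j}. Yt (k+1) = growth_map \<alpha>T \<phi> (Yt k) - BED_T \<alpha>T \<beta>T (d (k+1))"
    and "Y i < Yt i"
  shows "Y j < Yt j \<and> Yt j - Y j \<le> Yt i - Y i"
proof -
  interpret growth_law \<phi>
    by (rule growth_law.intro) (fact assms)+
  show ?thesis
  proof (rule iterates_order_and_gap[where f = "growth_map \<alpha>T \<phi>" and c = "\<lambda>k. BED_T \<alpha>T \<beta>T (d k)"])
    show "growth_map \<alpha>T \<phi> y < growth_map \<alpha>T \<phi> z" if "y < z" for y z
      using growth_map_strict_mono[OF assms(1) that] .
    show "growth_map \<alpha>T \<phi> z - growth_map \<alpha>T \<phi> y \<le> z - y" if "y \<le> z" for y z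
      using growth_map_diff_le[OF assms(1) that] .
    show "Y (Suc k) = growth_map \<alpha>T \<phi> (Y k) - BED_T \<alpha>T \<beta>T (d (Suc k))"
      and "Yt (Suc k) = growth_map \<alpha>T \<phi> (Yt k) - BED_T \<alpha>T \<beta>T (d (Suc k))"
      if "i \<le> k" "k < j" for k
      using assms(8,9) that by simp_all
  qed (use assms(6,10) in simp_all)
qed

end
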